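(* Let $\mathbf A$ be an algebra with a Mal'cev term, let $n\ge1$, let $q_n$ be a strong $n$-cube term of $\mathbf A$, and let $\alpha_0,\dots,\alpha_{n-1}$ be congruences of $\mathbf A$. Then a tuple $\mathbf a\in A^{2^n}$ belongs to $\Delta(\alpha_0,\dots,\alpha_{n-1})$ if and only if both (a) for every $j<n$, $(a_k\mid k<2^n,\ k_{(j)}=0)\in\Delta(\alpha_i\mid i<n,\ i\neq j)$, and (b) $q_n(a_0,\dots,a_{2^n-2})\equiv a_{2^n-1}\pmod{[\alpha_0,\dots,\alpha_{n-1}]}$.
   Context: A Mal'cev term is a ternary term $q$ with $q(x,x,y)\approx y\approx q(y,x,x)$. For $k\ge0$, $k_{(i)}$ denotes the $i$-th binary digit of $k$ (least significant is $i=0$). For $i<n$ let $\rho_i(k)$ be $k$ with its $i$-th binary digit set to $0$. A strong $n$-cube term is a $(2^n-1)$-ary term $q_n$ such that for each $i<n$ the identity $q_n(y_{\rho_i(0)},\dots,y_{\rho_i(2^n-2)})\approx y_{\rho_i(2^n-1)}$ holds. Tuples in $A^m$ are indexed by $0,\dots,m-1$; $(a_k\mid\phi(k))$ denotes the tuple of the $a_k$ with $\phi(k)$ in increasing order of $k$. For $a,b\in A$ and $i<n$, $\mathbf c_i^n(a,b)\in A^{2^n}$ has $k$-th coordinate $a$ if $k_{(i)}=0$ and $b$ if $k_{(i)}=1$. $\Delta(\alpha_0,\dots,\alpha_{n-1})$ is the subuniverse of $\mathbf A^{2^n}$ generated by $\{\mathbf c_i^n(a,b): i<n,\ (a,b)\in\alpha_i\}$,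 and $\Delta()=A$; $\Delta(\alpha_i\mid i\in I)$ means $\Delta$ of the $\alpha_i$, $i\in I$, listed in increasing order of $i$. Higher commutator (Bulatov): for congruences $\alpha_0,\dots,\alpha_{n-1},\gamma$, say $\alpha_0,\dots,\alpha_{n-2}$ centralize $\alpha_{n-1}$ modulo $\gamma$ if for all tuples $\mathbf a_i,\mathbf b_i$ ($i<n$, with $\mathbf a_i\neq\mathbf b_i$ congruent modulo $\alpha_i$ coordinatewise) and every term operation $t$ such that $t(\mathbf x_0,\dots,\mathbf x_{n-2},\mathbf a_{n-1})\equiv_\gamma t(\mathbf x_0,\dots,\mathbf x_{n-2},\mathbf b_{n-1})$ for all $(\mathbf x_0,\dots,\mathbf x_{n-2})\in(\{\mathbf a_0,\mathbf b_0\}\times\dots\times\{\mathbf a_{n-2},\mathbf b_{n-2}\})\setminus\{(\mathbf b_0,\dots,\mathbf b_{n-2})\}$, we have $t(\mathbf b_0,\dots,\mathbf b_{n-2},\mathbf a_{n-1})\equiv_\gamma t(\mathbf b_0,\dots,\mathbf b_{n-2},\mathbf b_{n-1})$. $[\alpha_0,\dots,\alpha_{n-1}]$ is the smallest such $\gamma$. *)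

theory Defs
  imports Main
begin

text \<open>An algebra is given by a carrier A and a set F of basic operations,
  each an operation paired with its arity; an operation of arity k is
  applied to lists of length k.\<close>

type_synonym 'a operation = "nat \<times> ('a list \<Rightarrow> 'a)"

definition algebra :: "'a set \<Rightarrow> 'a operation set \<Rightarrow> bool" where
  "algebra A F \<longleftrightarrow> (\<forall>(k, f) \<in> F. \<forall>xs. length xs = k \<and> set xs \<subseteq> A \<longrightarrow> f xs \<in> A)"

inductive_set term_ops :: "'a operation set \<Rightarrow> nat \<Rightarrow> ('a list \<Rightarrow> 'a) set"
  for F :: "'a operation set" and n :: nat where
  proj: "i < n \<Longrightarrow> (\<lambda>xs. xs ! i) \<in> term_ops F n"
| comp: "(k, f) \<in> F \<Longrightarrow> length gs = k \<Longrightarrow> \<forall>g\<in>set gs. g \<in> term_ops F n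
          \<Longrightarrow> (\<lambda>xs. f (map (\<lambda>g. g xs) gs)) \<in> term_ops F n"

definition has_malcev :: "'a set \<Rightarrow> 'a operation set \<Rightarrow> bool" where
  "has_malcev A F \<longleftrightarrow> (\<exists>q \<in> term_ops F 3. \<forall>x\<in>A. \<forall>y\<in>A. q [x, x, y] = y \<and> q [y, x, x] = y)"

text \<open>k with its i-th binary digit set to 0: unset_bit i k; the i-th digit: bit k i.\<close>
definition strong_cube_term :: "'a set \<Rightarrow> 'a operation set \<Rightarrow> nat \<Rightarrow> ('a list \<Rightarrow> 'a) \<Rightarrow> bool" where
  "strong_cube_term A F n q \<longleftrightarrow> q \<in> term_ops F (2^n - 1) \<and>
     (\<forall>i<n. \<forall>y :: nat \<Rightarrow> 'a. (\<forall>k. y k \<in> A) \<longrightarrow>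
        q (map (\<lambda>k. y (unset_bit i k)) [0..<2^n - 1]) = y (unset_bit i (2^n - 1)))"

definition congruence :: "'a set \<Rightarrow> 'a operation set \<Rightarrow> ('a \<times> 'a) set \<Rightarrow> bool" where
  "congruence A F \<theta> \<longleftrightarrow> \<theta> \<subseteq> A \<times> A \<and> equiv A \<theta> \<and>
     (\<forall>(k, f) \<in> F. \<forall>xs ys. length xs = k \<and> length ys = k \<and> list_all2 (\<lambda>x y. (x, y) \<in> \<theta>) xs ys
        \<longrightarrow> (f xs, f ys) \<in> \<theta>)"

text \<open>Subuniverse of A^m (tuples = lists of length m) generated by G.\<close>
inductive_set sub_gen :: "'a operation set \<Rightarrow> nat \<Rightarrow> 'a list set \<Rightarrow> 'a list set"
  for F :: "'a operation set" and m :: nat and G :: "'a list set" where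
  gen: "x \<in> G \<Longrightarrow> x \<in> sub_gen F m G"
| app: "(k, f) \<in> F \<Longrightarrow> length xs = k \<Longrightarrow> \<forall>x\<in>set xs. x \<in> sub_gen F m G
          \<Longrightarrow> map (\<lambda>j. f (map (\<lambda>x. x ! j) xs)) [0..<m] \<in> sub_gen F m G"

definition cube_vec :: "nat \<Rightarrow> nat \<Rightarrow> 'a \<Rightarrow> 'a \<Rightarrow> 'a list" where
  "cube_vec n i a b = map (\<lambda>k. if bit k i then b else a) [0..<2^n]"

definition Delta :: "'a set \<Rightarrow> 'a operation set \<Rightarrow> ('a \<times> 'a) set list \<Rightarrow> 'a list set" where
  "Delta A F \<alpha>s = (if \<alpha>s = [] then {[x] | x. x \<in> A}
     else sub_gen F (2 ^ length \<alpha>s)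
       {cube_vec (length \<alpha>s) i a b | i a b. i < length \<alpha>s \<and> (a, b) \<in> \<alpha>s ! i})"

text \<open>Bulatov centrality: \<alpha>s = [\<alpha>_0,...,\<alpha>_{n-1}]; alpha_0..alpha_{n-2} centralize
  alpha_{n-1} modulo \<gamma>. Tuples a_i, b_i are lists of length m_i; the term t has arity
  m_0 + ... + m_{n-1}; the choice vector s selects b_i (s i) or a_i (\<not> s i).\<close>
definition centralizes :: "'a set \<Rightarrow> 'a operation set \<Rightarrow> ('a \<times> 'a) set list \<Rightarrow> ('a \<times> 'a) set \<Rightarrow> bool" where
  "centralizes A F \<alpha>s \<gamma> \<longleftrightarrow> (let n = length \<alpha>s in
     \<forall>as bs :: nat \<Rightarrow> 'a list. \<forall>t.
       (\<forall>i<n. length (as i) = length (bs i) \<and> set (as i) \<subseteq> A \<and> set (bs i) \<subseteq> A \<and>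
              as i \<noteq> bs i \<and> list_all2 (\<lambda>x y. (x, y) \<in> \<alpha>s ! i) (as i) (bs i)) \<longrightarrow>
       t \<in> term_ops F (\<Sum>i<n. length (as i)) \<longrightarrow>
       (\<forall>s :: nat \<Rightarrow> bool. \<not> (\<forall>i<n - 1. s i) \<longrightarrow>
          (t (concat (map (\<lambda>i. if s i then bs i else as i) [0..<n - 1]) @ as (n - 1)),
           t (concat (map (\<lambda>i. if s i then bs i else as i) [0..<n - 1]) @ bs (n - 1))) \<in> \<gamma>) \<longrightarrow>
       (t (concat (map bs [0..<n - 1]) @ as (n - 1)),
        t (concat (map bs [0..<n - 1]) @ bs (n - 1))) \<in> \<gamma>)"

definition commutator :: "'a set \<Rightarrow> 'a operation set \<Rightarrow> ('a \<times> 'a) set list \<Rightarrow> ('a \<times> 'a) set" where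
  "commutator A F \<alpha>s = \<Inter> {\<gamma>. congruence A F \<gamma> \<and> centralizes A F \<alpha>s \<gamma>}"

end

theory Submission
  imports Defs
begin

text \<open>Write \<open>\<Delta>\<close> for \<open>\<Delta>(\<alpha>\<^sub>0, \<dots>, \<alpha>\<^sub>n\<^sub>-\<^sub>1) \<subseteq> A\<^sup>N\<close>, \<open>N = 2\<^sup>n\<close>, and \<open>x \<sim> y\<close> for
  \<open>(x, \<dots>, x, y) \<in> \<Delta>\<close>. With the Mal'cev term \<open>m\<close>, \<open>\<sim>\<close> is a congruence, and applying \<open>q\<close> to
  reflected copies of a tuple of \<open>\<Delta>\<close> shows that its top entry is \<open>\<sim>\<close>-related to \<open>q\<close> of the
  others. Hence two tuples of \<open>\<Delta>\<close> that are \<open>\<sim>\<close>-related below the top vertex are also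
  related at the top. For a term \<open>t\<close>, the cubes \<open>p \<mapsto> t(\<dots>)\<close> with and without the last direction
  lie in \<open>\<Delta>\<close>, and the hypothesis of the term condition relates them below the top; so the
  \<open>\<alpha>\<^sub>i\<close> centralize \<open>\<sim>\<close>, and \<open>\<sim>\<close> contains the commutator.

  Sufficiency: the faces put every tuple \<open>(a\<^sub>p AND j)\<^sub>p\<close>, \<open>j < N - 1\<close>, into \<open>\<Delta>\<close>; applying \<open>q\<close>
  to them yields \<open>a\<close> with its top entry replaced by \<open>e = q(a\<^sub>0, \<dots>, a\<^sub>N\<^sub>-\<^sub>2)\<close>, and \<open>m\<close> together
  with \<open>e \<sim> a\<^sub>N\<^sub>-\<^sub>1\<close> repairs the top.

  Necessity: faces of generators of \<open>\<Delta>\<close> are generators of the smaller \<open>\<Delta>\<close>. Writing \<open>a\<close> as a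
  term \<open>t\<close> applied to generators, \<open>m(t, q \<circ> t, e)\<close> is constantly \<open>e\<close> on all vertices of the
  cube with a zero coordinate, so the term condition for any centralizing congruence relates
  \<open>e\<close> to its value \<open>t = a\<^sub>N\<^sub>-\<^sub>1\<close> at the top vertex.\<close>

section \<open>Term operations and generated subuniverses\<close>

lemma term_ops_compose:
  assumes "t \<in> term_ops F k" "length gs = k" "\<forall>g\<in>set gs. g \<in> term_ops F m"
  shows "(\<lambda>xs. t (map (\<lambda>g. g xs) gs)) \<in> term_ops F m"
  using assms
proof (induction t rule: term_ops.induct)
  case (proj i)
  have "(\<lambda>xs. map (\<lambda>g. g xs) gs ! i) = gs ! i" using proj by (auto simp: fun_eq_iff)
  then show ?case using proj by auto
next
  case (comp k' f hs)
  have "(\<lambda>xs. f (map (\<lambda>g. g xs) (map (\<lambda>h xs. h (map (\<lambda>g. g xs) gs)) hs))) \<in> term_ops F m"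
    by (rule term_ops.comp[OF comp(1)]) (use comp in auto)
  then show ?case by (simp add: o_def)
qed

lemma term_ops_reindex:
  assumes "t \<in> term_ops F k" "\<forall>i<k. h i < m"
  shows "(\<lambda>xs. t (map (\<lambda>i. xs ! h i) [0..<k])) \<in> term_ops F m"
proof -
  have "(\<lambda>xs. t (map (\<lambda>g. g xs) (map (\<lambda>i xs. xs ! h i) [0..<k]))) \<in> term_ops F m"
    by (rule term_ops_compose[OF assms(1)]) (use assms(2) in \<open>auto intro: term_ops.proj\<close>)
  then show ?thesis by (simp add: o_def)
qed

lemma algebraD:
  assumes "algebra A F" "(k, f) \<in> F" "length xs = k" "set xs \<subseteq> A"
  shows "f xs \<in> A"
  using assms unfolding algebra_def by fast

lemma term_ops_closed:
  assumes "algebra A F" "t \<in> term_ops F k" "length xs = k" "set xs \<subseteq> A"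
  shows "t xs \<in> A"
  using assms(2,3)
proof (induction t rule: term_ops.induct)
  case (proj i)
  then show ?case using assms(4) by auto
next
  case (comp k' f gs)
  then show ?case by (intro algebraD[OF assms(1) comp(1)]) auto
qed

lemma congruence_in_carrier: "congruence A F \<theta> \<Longrightarrow> (x, y) \<in> \<theta> \<Longrightarrow> x \<in> A \<and> y \<in> A"
  unfolding congruence_def by blast

lemma congruence_refl: "congruence A F \<theta> \<Longrightarrow> x \<in> A \<Longrightarrow> (x, x) \<in> \<theta>"
  unfolding congruence_def equiv_def refl_on_def by blast

lemma congruence_sym: "congruence A F \<theta> \<Longrightarrow> (x, y) \<in> \<theta> \<Longrightarrow> (y, x) \<in> \<theta>"
  unfolding congruence_def equiv_def by (meson symD)

lemma congruenceI:
  assumes "\<theta> \<subseteq> A \<times> A"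
    and "\<And>x. x \<in> A \<Longrightarrow> (x, x) \<in> \<theta>"
    and "\<And>x y. (x, y) \<in> \<theta> \<Longrightarrow> (y, x) \<in> \<theta>"
    and "\<And>x y z. (x, y) \<in> \<theta> \<Longrightarrow> (y, z) \<in> \<theta> \<Longrightarrow> (x, z) \<in> \<theta>"
    and "\<And>k f xs ys. (k, f) \<in> F \<Longrightarrow> length xs = k \<Longrightarrow> length ys = k \<Longrightarrow>
           list_all2 (\<lambda>x y. (x, y) \<in> \<theta>) xs ys \<Longrightarrow> (f xs, f ys) \<in> \<theta>"
  shows "congruence A F \<theta>"
  unfolding congruence_def equiv_def refl_on_def sym_def trans_def using assms by fast

lemma sub_gen_length:
  assumes "\<forall>g\<in>G. length g = m" "x \<in> sub_gen F m G"
  shows "length x = m"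
  using assms(2) by (induction x rule: sub_gen.induct) (use assms(1) in auto)

lemma sub_gen_closed:
  assumes "algebra A F" "\<forall>g\<in>G. length g = m \<and> set g \<subseteq> A" "x \<in> sub_gen F m G"
  shows "set x \<subseteq> A"
  using assms(3)
proof (induction x rule: sub_gen.induct)
  case (gen x)
  then show ?case using assms(2) by auto
next
  case (app k f xs)
  have "f (map (\<lambda>x. x ! j) xs) \<in> A" if "j < m" for j
  proof (rule algebraD[OF assms(1) app(1)])
    have "length x = m" if "x \<in> set xs" for x
      using sub_gen_length[of G m x] assms(2) app(3) that by blast
    then show "set (map (\<lambda>x. x ! j) xs) \<subseteq> A" using app(3) \<open>j < m\<close> by (fastforce dest: nth_mem)
  qed (use app in simp)
  then show ?case by auto
qed

lemma sub_gen_term_closed: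
  assumes "\<forall>g\<in>G. length g = m" "t \<in> term_ops F k" "length xs = k" "set xs \<subseteq> sub_gen F m G"
  shows "map (\<lambda>p. t (map (\<lambda>x. x ! p) xs)) [0..<m] \<in> sub_gen F m G"
  using assms(2,3)
proof (induction t rule: term_ops.induct)
  case (proj i)
  then have "xs ! i \<in> sub_gen F m G" using assms(4) by auto
  moreover have "map (\<lambda>p. map (\<lambda>x. x ! p) xs ! i) [0..<m] = xs ! i"
    using sub_gen_length[OF assms(1) calculation] proj by (intro nth_equalityI) auto
  ultimately show ?case by simp
next
  case (comp k' f gs)
  let ?ys = "map (\<lambda>g. map (\<lambda>p. g (map (\<lambda>x. x ! p) xs)) [0..<m]) gs"
  have "map (\<lambda>j. f (map (\<lambda>x. x ! j) ?ys)) [0..<m] \<in> sub_gen F m G"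
    by (rule sub_gen.app[OF comp(1)]) (use comp in auto)
  moreover have "map (\<lambda>j. f (map (\<lambda>x. x ! j) ?ys)) [0..<m]
      = map (\<lambda>p. f (map (\<lambda>g. g (map (\<lambda>x. x ! p) xs)) gs)) [0..<m]"
    by (auto simp: o_def)
  ultimately show ?case by metis
qed

lemma sub_gen_reindex:
  assumes "\<forall>p<m'. \<sigma> p < m" "\<forall>g\<in>G. length g = m"
    "\<forall>g\<in>G. map (\<lambda>p. g ! \<sigma> p) [0..<m'] \<in> sub_gen F m' G'"
    "c \<in> sub_gen F m G"
  shows "map (\<lambda>p. c ! \<sigma> p) [0..<m'] \<in> sub_gen F m' G'"
  using assms(4)
proof (induction c rule: sub_gen.induct)
  case (gen x)
  then show ?case using assms(3) by auto
next
  case (app k f xs)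
  let ?ys = "map (\<lambda>x. map (\<lambda>p. x ! \<sigma> p) [0..<m']) xs"
  have "map (\<lambda>j. f (map (\<lambda>x. x ! j) ?ys)) [0..<m'] \<in> sub_gen F m' G'"
    by (rule sub_gen.app[OF app(1)]) (use app in auto)
  moreover have "map (\<lambda>j. f (map (\<lambda>x. x ! j) ?ys)) [0..<m']
      = map (\<lambda>p. map (\<lambda>j. f (map (\<lambda>x. x ! j) xs)) [0..<m] ! \<sigma> p) [0..<m']"
    using assms(1) by (auto simp: o_def)
  ultimately show ?case by metis
qed

lemma concat_nth_offset:
  assumes "r < length Ls" "i < length (Ls ! r)"
  shows "sum_list (map length (take r Ls)) + i < length (concat Ls)"
    and "concat Ls ! (sum_list (map length (take r Ls)) + i) = Ls ! r ! i"
  using assms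
proof (induction Ls arbitrary: r)
  case (Cons L Ls)
  { case 1 then show ?case using Cons.IH(1)[of "r - 1"] by (cases r) auto }
  { case 2 then show ?case using Cons.IH(2)[of "r - 1"] by (cases r) (auto simp: nth_append) }
qed simp_all

lemma take_eq_map_nth: "k \<le> length xs \<Longrightarrow> take k xs = map (\<lambda>j. xs ! j) [0..<k]"
  by (rule nth_equalityI) auto

lemma mult_add_less_mult: "i < m \<Longrightarrow> r < B \<Longrightarrow> i * B + r < m * (B::nat)"
  using mult_le_mono1[of "Suc i" m B] by simp

lemma nth_concat_uniform:
  assumes "\<forall>i<m. length (f i) = B" "i < m" "r < B"
  shows "concat (map f [0..<m]) ! (i * B + r) = f i ! r"
  using assms
proof (induction m)
  case (Suc m)
  have "length (concat (map f [0..<m])) = m * B"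
    using Suc.prems(1) by (induction m) auto
  show ?case
  proof (cases "i < m")
    case True
    then show ?thesis
      using Suc mult_add_less_mult[of i m r B] \<open>length (concat (map f [0..<m])) = m * B\<close>
      by (simp add: nth_append)
  next
    case False
    then have "i = m" using Suc.prems by simp
    then show ?thesis using Suc \<open>length (concat (map f [0..<m])) = m * B\<close> by (simp add: nth_append)
  qed
qed simp

lemma term_rep_extend:
  assumes "t \<in> term_ops F (length gs)" "\<forall>i<length gs. h i < length gs' \<and> gs' ! h i = gs ! i"
  shows "(\<lambda>ys. t (map (\<lambda>i. ys ! h i) [0..<length gs])) \<in> term_ops F (length gs')"
    and "t (map (\<lambda>g. g ! p) gs) = t (map (\<lambda>i. map (\<lambda>g. g ! p) gs' ! h i) [0..<length gs])"
  using assms by (auto intro: term_ops_reindex intro!: arg_cong[where f=t] nth_equalityI)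

lemma sub_gen_term_rep:
  assumes "\<forall>g\<in>G. length g = m" "x \<in> sub_gen F m G"
  shows "\<exists>gs t. set gs \<subseteq> G \<and> t \<in> term_ops F (length gs) \<and>
           x = map (\<lambda>p. t (map (\<lambda>g. g ! p) gs)) [0..<m]"
  using assms(2)
proof (induction x rule: sub_gen.induct)
  case (gen x)
  have "x = map (\<lambda>p. (\<lambda>xs. xs ! 0) (map (\<lambda>g. g ! p) [x])) [0..<m]"
    using assms(1) gen by (intro nth_equalityI) auto
  then show ?case using gen by (intro exI[of _ "[x]"] exI[of _ "\<lambda>xs. xs ! 0"]) (simp add: term_ops.proj)
next
  case (app k f xs)
  then obtain GS T where GT: "\<And>x. x \<in> set xs \<Longrightarrow> set (GS x) \<subseteq> G \<and> T x \<in> term_ops F (length (GS x)) \<and>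
           x = map (\<lambda>p. T x (map (\<lambda>g. g ! p) (GS x))) [0..<m]"
    by metis
  define gs where "gs = concat (map GS xs)"
  define off where "off r = sum_list (map length (take r (map GS xs)))" for r
  define T' where "T' r ys = T (xs ! r) (map (\<lambda>i. ys ! (off r + i)) [0..<length (GS (xs ! r))])" for r ys
  have embed: "\<forall>i<length (GS (xs ! r)). off r + i < length gs \<and> gs ! (off r + i) = GS (xs ! r) ! i"
    if "r < length xs" for r
    using concat_nth_offset[of r "map GS xs"] that unfolding off_def gs_def by simp
  have T'_term: "T' r \<in> term_ops F (length gs)" if "r < length xs" for r
    unfolding T'_def by (rule term_rep_extend(1)) (use GT[OF nth_mem[OF that]] embed[OF that] in auto)
  have T'_eval: "xs ! r ! p = T' r (map (\<lambda>g. g ! p) gs)" if "r < length xs" "p < m" for r p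
  proof -
    have r: "xs ! r \<in> set xs" using that by simp
    have "xs ! r ! p = T (xs ! r) (map (\<lambda>g. g ! p) (GS (xs ! r)))"
      using GT[OF r] that(2) by (metis (no_types, lifting) diff_zero length_upt nth_map_upt add_0)
    then show "xs ! r ! p = T' r (map (\<lambda>g. g ! p) gs)"
      unfolding T'_def using term_rep_extend(2)[of _ F "GS (xs ! r)" "\<lambda>i. off r + i" gs] GT[OF r] embed[OF that(1)]
      by simp
  qed
  define t where "t ys = f (map (\<lambda>r. T' r ys) [0..<length xs])" for ys
  have "(\<lambda>ys. f (map (\<lambda>g. g ys) (map T' [0..<length xs]))) \<in> term_ops F (length gs)"
    by (rule term_ops.comp[OF app(1)]) (use app(2) T'_term in auto)
  then have "t \<in> term_ops F (length gs)" unfolding t_def by (simp add: o_def)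
  moreover have "map (\<lambda>j. f (map (\<lambda>x. x ! j) xs)) [0..<m] = map (\<lambda>p. t (map (\<lambda>g. g ! p) gs)) [0..<m]"
    unfolding t_def by (auto intro!: arg_cong[where f=f] nth_equalityI simp: T'_eval)
  moreover have "set gs \<subseteq> G" using GT unfolding gs_def by auto
  ultimately show ?case by blast
qed

section \<open>Binary indices\<close>

lemma less_power2_iff_bits: "(x::nat) < 2 ^ n \<longleftrightarrow> (\<forall>i\<ge>n. \<not> bit x i)"
proof
  assume "x < 2 ^ n"
  then have "take_bit n x = x" by (simp add: take_bit_nat_eq_self_iff)
  then show "\<forall>i\<ge>n. \<not> bit x i" by (metis bit_take_bit_iff not_le)
next
  assume "\<forall>i\<ge>n. \<not> bit x i"
  then have "take_bit n x = x" by (intro bit_eqI) (metis bit_take_bit_iff not_le)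
  then show "x < 2 ^ n" by (simp add: take_bit_nat_eq_self_iff)
qed

lemma bit_power2_minus_1 [simp]: "bit (2 ^ n - Suc 0 :: nat) i \<longleftrightarrow> i < n"
  using bit_mask_iff[where 'a=nat, of n i] by (simp add: mask_eq_exp_minus_1)

lemma eq_power2_minus_1_iff_bits:
  assumes "(p::nat) < 2 ^ n"
  shows "p = 2 ^ n - 1 \<longleftrightarrow> (\<forall>i<n. bit p i)"
proof
  assume all: "\<forall>i<n. bit p i"
  have "bit p i = bit (2 ^ n - 1 :: nat) i" for i
    using all assms by (cases "i < n") (auto simp: less_power2_iff_bits)
  then show "p = 2 ^ n - 1" by (intro bit_eqI) simp
qed simp

lemma less_power2_minus_1_obtains_zero_bit:
  assumes "(p::nat) < 2 ^ n - 1"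
  obtains i where "i < n" "\<not> bit p i"
  using eq_power2_minus_1_iff_bits[of p n] assms by fastforce

lemma and_less_power2: "(p::nat) < 2 ^ n \<Longrightarrow> and p j < 2 ^ n"
  unfolding less_power2_iff_bits by (simp add: bit_and_iff)

definition insert_zero_bit :: "nat \<Rightarrow> nat \<Rightarrow> nat" where
  "insert_zero_bit j m = take_bit j m + push_bit (Suc j) (drop_bit j m)"

definition delete_bit :: "nat \<Rightarrow> nat \<Rightarrow> nat" where
  "delete_bit j p = take_bit j p + push_bit j (drop_bit (Suc j) p)"

lemma bit_insert_zero_bit:
  "bit (insert_zero_bit j m) i \<longleftrightarrow> (i < j \<and> bit m i) \<or> (Suc j \<le> i \<and> bit m (i - 1))"
  unfolding insert_zero_bit_def
  by (subst bit_disjunctive_add_iff)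
    (auto simp del: push_bit_Suc simp: bit_take_bit_iff bit_push_bit_iff bit_drop_bit_eq)

lemma bit_delete_bit: "bit (delete_bit j p) i \<longleftrightarrow> (i < j \<and> bit p i) \<or> (j \<le> i \<and> bit p (Suc i))"
  unfolding delete_bit_def
  by (subst bit_disjunctive_add_iff)
    (auto simp del: push_bit_Suc simp: bit_take_bit_iff bit_push_bit_iff bit_drop_bit_eq)

lemma insert_zero_bit_delete_bit: "insert_zero_bit j (delete_bit j p) = unset_bit j p"
proof (rule bit_eqI)
  fix i
  show "bit (insert_zero_bit j (delete_bit j p)) i = bit (unset_bit j p) i"
    by (cases i) (auto simp: bit_insert_zero_bit bit_delete_bit bit_unset_bit_iff)
qed

lemma insert_zero_bit_less: "j < n \<Longrightarrow> m < 2 ^ (n - 1) \<Longrightarrow> insert_zero_bit j m < 2 ^ n"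
  unfolding less_power2_iff_bits by (auto simp: bit_insert_zero_bit)

lemma delete_bit_less: "j < n \<Longrightarrow> p < 2 ^ n \<Longrightarrow> delete_bit j p < 2 ^ (n - 1)"
  unfolding less_power2_iff_bits by (auto simp: bit_delete_bit)

lemma strict_mono_insert_zero_bit: "strict_mono (insert_zero_bit j)"
proof (rule strict_monoI)
  fix m m' :: nat
  assume "m < m'"
  define d :: nat where "d = 2 ^ j"
  have ins: "insert_zero_bit j x = x mod d + 2 * d * (x div d)" for x
    by (simp add: insert_zero_bit_def d_def take_bit_eq_mod push_bit_eq_mult drop_bit_eq_div)
  have "m div d \<le> m' div d" using \<open>m < m'\<close> by (simp add: div_le_mono)
  then consider "m div d < m' div d" | "m div d = m' div d" by linarith
  then show "insert_zero_bit j m < insert_zero_bit j m'"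
  proof cases
    case 1
    have "m mod d < d" by (simp add: d_def)
    then have "m mod d + 2 * d * (m div d) < 2 * d * (m div d + 1)" by simp
    also have "\<dots> \<le> 2 * d * (m' div d)" using 1 by (intro mult_le_mono2) simp
    finally show ?thesis unfolding ins by linarith
  next
    case 2
    have "m mod d < m' mod d"
      using \<open>m < m'\<close> by (metis 2 add_less_cancel_left div_mult_mod_eq)
    then show ?thesis unfolding ins 2 by linarith
  qed
qed

lemma filter_zero_bit_eq_map_insert_zero_bit:
  assumes "j < n"
  shows "filter (\<lambda>k. \<not> bit k j) [0..<2 ^ n] = map (insert_zero_bit j) [0..<2 ^ (n - 1)]"
proof (rule sorted_distinct_set_unique)
  show "sorted (filter (\<lambda>k. \<not> bit k j) [0..<2 ^ n])" by (rule sorted_wrt_filter) simp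
  show "sorted (map (insert_zero_bit j) [0..<2 ^ (n - 1)])"
    by (simp add: sorted_map strict_mono_less_eq[OF strict_mono_insert_zero_bit])
  show "distinct (map (insert_zero_bit j) [0..<2 ^ (n - 1)])"
    by (simp add: distinct_map strict_mono_imp_inj_on[OF strict_mono_insert_zero_bit])
  have "k \<in> insert_zero_bit j ` {0..<2 ^ (n - 1)}" if "k < 2 ^ n" "\<not> bit k j" for k
  proof
    have "unset_bit j k = k" using that(2) by (intro bit_eqI) (auto simp: bit_unset_bit_iff)
    then show "k = insert_zero_bit j (delete_bit j k)" by (simp add: insert_zero_bit_delete_bit)
    show "delete_bit j k \<in> {0..<2 ^ (n - 1)}" using delete_bit_less[OF assms that(1)] by simp
  qed
  then show "set (filter (\<lambda>k. \<not> bit k j) [0..<2 ^ n]) = set (map (insert_zero_bit j) [0..<2 ^ (n - 1)])"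
    using insert_zero_bit_less[OF assms] by (auto simp: bit_insert_zero_bit)
qed simp_all

section \<open>Centrality in terms of selectors\<close>

lemma length_cube_vec [simp]: "length (cube_vec n i a b) = 2 ^ n"
  by (simp add: cube_vec_def)

lemma nth_cube_vec: "p < 2 ^ n \<Longrightarrow> cube_vec n i a b ! p = (if bit p i then b else a)"
  by (simp add: cube_vec_def)

lemma cube_vec_same: "cube_vec n i x x = replicate (2 ^ n) x"
  by (rule nth_equalityI) (simp_all add: nth_cube_vec)

definition cube_select :: "(nat \<Rightarrow> 'a list) \<Rightarrow> (nat \<Rightarrow> 'a list) \<Rightarrow> nat \<Rightarrow> (nat \<Rightarrow> bool) \<Rightarrow> 'a list" where
  "cube_select as bs n s = concat (map (\<lambda>i. if s i then bs i else as i) [0..<n])"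

lemma length_cube_select:
  assumes "\<And>i. i < n \<Longrightarrow> length (as i) = length (bs i)"
  shows "length (cube_select as bs n s) = (\<Sum>i<n. length (as i))"
proof -
  have "length (cube_select as bs n s) = (\<Sum>i<n. length (if s i then bs i else as i))"
    unfolding cube_select_def length_concat
    by (simp add: interv_sum_list_conv_sum_set_nat atLeast0LessThan o_def)
  also have "\<dots> = (\<Sum>i<n. length (as i))" using assms by (intro sum.cong) auto
  finally show ?thesis .
qed

lemma cube_select_cong:
  "(\<And>i. i < n \<Longrightarrow> s i = s' i) \<Longrightarrow> cube_select as bs n s = cube_select as bs n s'"
  unfolding cube_select_def by (intro arg_cong[where f=concat] map_cong) auto

lemma cube_select_snoc:
  assumes "n \<ge> 1"
  shows "concat (map (\<lambda>i. if s i then bs i else as i) [0..<n - 1]) @ (if b then bs (n - 1) else as (n - 1))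
      = cube_select as bs n (s(n - 1 := b))"
proof -
  have upt: "[0..<n] = [0..<n - 1] @ [n - 1]"
    using assms by (metis Suc_pred' less_eq_Suc_le upt_Suc_append zero_le One_nat_def)
  have map_eq: "map (\<lambda>i. if (s(n - 1 := b)) i then bs i else as i) [0..<n - 1]
      = map (\<lambda>i. if s i then bs i else as i) [0..<n - 1]"
    by (intro map_cong) auto
  show ?thesis unfolding cube_select_def upt map_append concat_append map_eq by simp
qed

definition cube_pairs :: "'a set \<Rightarrow> ('a \<times> 'a) set list \<Rightarrow> (nat \<Rightarrow> 'a list) \<Rightarrow> (nat \<Rightarrow> 'a list) \<Rightarrow> bool" where
  "cube_pairs A \<alpha>s as bs \<longleftrightarrow> (\<forall>i<length \<alpha>s. length (as i) = length (bs i) \<and> set (as i) \<subseteq> A \<and>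
     set (bs i) \<subseteq> A \<and> as i \<noteq> bs i \<and> list_all2 (\<lambda>x y. (x, y) \<in> \<alpha>s ! i) (as i) (bs i))"

lemma centralizes_iff_cube_select:
  assumes "length \<alpha>s = n" "n \<ge> 1"
  shows "centralizes A F \<alpha>s \<gamma> \<longleftrightarrow>
    (\<forall>as bs t. cube_pairs A \<alpha>s as bs \<longrightarrow> t \<in> term_ops F (\<Sum>i<n. length (as i)) \<longrightarrow>
      (\<forall>s. \<not> (\<forall>i<n - 1. s i) \<longrightarrow>
        (t (cube_select as bs n (s(n - 1 := False))), t (cube_select as bs n (s(n - 1 := True)))) \<in> \<gamma>) \<longrightarrow>
      (t (cube_select as bs n (\<lambda>i. i \<noteq> n - 1)), t (cube_select as bs n (\<lambda>_. True))) \<in> \<gamma>)"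
proof -
  have top: "concat (map bs [0..<n - 1]) @ as (n - 1) = cube_select as bs n (\<lambda>i. i \<noteq> n - 1)"
    "concat (map bs [0..<n - 1]) @ bs (n - 1) = cube_select as bs n (\<lambda>_. True)"
    for as bs :: "nat \<Rightarrow> 'a list"
    using cube_select_snoc[OF assms(2), of "\<lambda>_. True" bs as False]
      cube_select_snoc[OF assms(2), of "\<lambda>_. True" bs as True]
    by (simp_all add: fun_upd_def)
  have other: "concat (map (\<lambda>i. if s i then bs i else as i) [0..<n - 1]) @ as (n - 1)
      = cube_select as bs n (s(n - 1 := False))"
    "concat (map (\<lambda>i. if s i then bs i else as i) [0..<n - 1]) @ bs (n - 1)
      = cube_select as bs n (s(n - 1 := True))"
    for as bs :: "nat \<Rightarrow> 'a list" and s
    using cube_select_snoc[OF assms(2), of s bs as False] cube_select_snoc[OF assms(2), of s bs as True]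
    by simp_all
  show ?thesis
    unfolding centralizes_def cube_pairs_def assms(1) Let_def other top[symmetric] ..
qed

section \<open>The subuniverse \<open>\<Delta>\<close> and its faces\<close>

locale cube_congruences =
  fixes A :: "'a set" and F :: "'a operation set" and n :: nat and \<alpha>s :: "('a \<times> 'a) set list"
  assumes alg: "algebra A F" and n_pos: "n \<ge> 1" and length_\<alpha>s: "length \<alpha>s = n"
    and congs: "\<forall>i<n. congruence A F (\<alpha>s ! i)"
begin

abbreviation N :: nat where "N \<equiv> 2 ^ n"

definition Gen :: "'a list set" where
  "Gen = {cube_vec n i a b | i a b. i < n \<and> (a, b) \<in> \<alpha>s ! i}"

abbreviation \<Delta> :: "'a list set" where "\<Delta> \<equiv> sub_gen F N Gen"

lemma Delta_eq: "Delta A F \<alpha>s = \<Delta>"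
  using length_\<alpha>s n_pos unfolding Delta_def Gen_def by auto

lemma N_ge_2: "N \<ge> 2"
  using power_increasing[OF n_pos, of "2::nat"] by simp

lemma \<alpha>_congruence: "i < n \<Longrightarrow> congruence A F (\<alpha>s ! i)"
  using congs by blast

lemma \<alpha>_in_carrier: "i < n \<Longrightarrow> (x, y) \<in> \<alpha>s ! i \<Longrightarrow> x \<in> A \<and> y \<in> A"
  using congruence_in_carrier[OF \<alpha>_congruence] by blast

lemma \<alpha>_refl: "i < n \<Longrightarrow> x \<in> A \<Longrightarrow> (x, x) \<in> \<alpha>s ! i"
  using congruence_refl[OF \<alpha>_congruence] by blast

lemma \<alpha>_sym: "i < n \<Longrightarrow> (x, y) \<in> \<alpha>s ! i \<Longrightarrow> (y, x) \<in> \<alpha>s ! i"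
  using congruence_sym[OF \<alpha>_congruence] by blast

lemma Gen_wf: "\<forall>g\<in>Gen. length g = N \<and> set g \<subseteq> A"
  unfolding Gen_def cube_vec_def using \<alpha>_in_carrier by fastforce

lemma length_Delta: "c \<in> \<Delta> \<Longrightarrow> length c = N"
  using sub_gen_length Gen_wf by blast

lemma Delta_nth_in_carrier: "c \<in> \<Delta> \<Longrightarrow> p < N \<Longrightarrow> c ! p \<in> A"
  using sub_gen_closed[OF alg Gen_wf] length_Delta by (metis nth_mem subsetD)

lemma Delta_term_closed:
  "t \<in> term_ops F k \<Longrightarrow> length xs = k \<Longrightarrow> set xs \<subseteq> \<Delta> \<Longrightarrow>
    map (\<lambda>p. t (map (\<lambda>x. x ! p) xs)) [0..<N] \<in> \<Delta>"
  using sub_gen_term_closed Gen_wf by blast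

lemma cube_vec_in_Delta: "i < n \<Longrightarrow> (a, b) \<in> \<alpha>s ! i \<Longrightarrow> cube_vec n i a b \<in> \<Delta>"
  unfolding Gen_def by (rule sub_gen.gen) blast

lemma replicate_in_Delta: "x \<in> A \<Longrightarrow> replicate N x \<in> \<Delta>"
  using cube_vec_in_Delta[of 0 x x] \<alpha>_refl[of 0 x] n_pos by (simp add: cube_vec_same)

lemma Delta_reindex:
  assumes "\<forall>p<N. \<sigma> p < N"
    and "\<forall>i<n. (\<forall>p<N. bit (\<sigma> p) i = bit p i) \<or> (\<forall>p<N. \<not> bit (\<sigma> p) i) \<or>
            (\<forall>p<N. bit (\<sigma> p) i) \<or> (\<forall>p<N. bit (\<sigma> p) i = (\<not> bit p i))"
    and "c \<in> \<Delta>"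
  shows "map (\<lambda>p. c ! \<sigma> p) [0..<N] \<in> \<Delta>"
proof (rule sub_gen_reindex[OF assms(1) _ _ assms(3)])
  show "\<forall>g\<in>Gen. length g = N" using Gen_wf by blast
  show "\<forall>g\<in>Gen. map (\<lambda>p. g ! \<sigma> p) [0..<N] \<in> \<Delta>"
  proof
    fix g assume "g \<in> Gen"
    then obtain i a b where g: "g = cube_vec n i a b" and i: "i < n" and ab: "(a, b) \<in> \<alpha>s ! i"
      unfolding Gen_def by blast
    have A: "a \<in> A" "b \<in> A" using \<alpha>_in_carrier[OF i ab] by auto
    have g\<sigma>: "map (\<lambda>p. g ! \<sigma> p) [0..<N] = cube_vec n i x y"
      if "\<forall>p<N. (if bit (\<sigma> p) i then b else a) = (if bit p i then y else x)" for x y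
      using that assms(1) by (intro nth_equalityI) (auto simp: g nth_cube_vec)
    from assms(2) i consider "\<forall>p<N. bit (\<sigma> p) i = bit p i" | "\<forall>p<N. \<not> bit (\<sigma> p) i"
      | "\<forall>p<N. bit (\<sigma> p) i" | "\<forall>p<N. bit (\<sigma> p) i = (\<not> bit p i)" by blast
    then show "map (\<lambda>p. g ! \<sigma> p) [0..<N] \<in> \<Delta>"
    proof cases
      case 1
      then have "map (\<lambda>p. g ! \<sigma> p) [0..<N] = cube_vec n i a b" by (intro g\<sigma>) simp
      then show ?thesis using cube_vec_in_Delta[OF i ab] by simp
    next
      case 2
      then have "map (\<lambda>p. g ! \<sigma> p) [0..<N] = cube_vec n i a a" by (intro g\<sigma>) simp
      then show ?thesis using cube_vec_in_Delta[OF i \<alpha>_refl[OF i A(1)]] by simp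
    next
      case 3
      then have "map (\<lambda>p. g ! \<sigma> p) [0..<N] = cube_vec n i b b" by (intro g\<sigma>) simp
      then show ?thesis using cube_vec_in_Delta[OF i \<alpha>_refl[OF i A(2)]] by simp
    next
      case 4
      then have "map (\<lambda>p. g ! \<sigma> p) [0..<N] = cube_vec n i b a" by (intro g\<sigma>) simp
      then show ?thesis using cube_vec_in_Delta[OF i \<alpha>_sym[OF i ab]] by simp
    qed
  qed
qed

lemma cube_select_in_Delta:
  assumes "\<forall>i<n. length (as i) = length (bs i) \<and> list_all2 (\<lambda>x y. (x, y) \<in> \<alpha>s ! i) (as i) (bs i)"
    and "t \<in> term_ops F (\<Sum>i<n. length (as i))"
  shows "map (\<lambda>p. t (cube_select as bs n (bit p))) [0..<N] \<in> \<Delta>"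
proof -
  define gen where "gen i = map (\<lambda>r. cube_vec n i (as i ! r) (bs i ! r)) [0..<length (as i)]" for i
  define gens where "gens = concat (map gen [0..<n])"
  have "length gens = (\<Sum>i<n. length (as i))"
    unfolding gens_def gen_def length_concat
    by (simp add: interv_sum_list_conv_sum_set_nat atLeast0LessThan o_def)
  moreover have "set gens \<subseteq> \<Delta>"
  proof
    fix g assume "g \<in> set gens"
    then obtain i r where "i < n" "r < length (as i)" "g = cube_vec n i (as i ! r) (bs i ! r)"
      unfolding gens_def gen_def by auto
    then show "g \<in> \<Delta>" using assms(1) by (simp add: cube_vec_in_Delta list_all2_conv_all_nth)
  qed
  ultimately have "map (\<lambda>p. t (map (\<lambda>x. x ! p) gens)) [0..<N] \<in> \<Delta>"
    by (rule Delta_term_closed[OF assms(2)])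
  moreover have col: "map (\<lambda>x. x ! p) gens = cube_select as bs n (bit p)" if "p < N" for p
  proof -
    have "map (\<lambda>x. x ! p) (gen i) = (if bit p i then bs i else as i)" if "i < n" for i
      using assms(1) \<open>p < N\<close> that by (intro nth_equalityI) (auto simp: gen_def nth_cube_vec)
    then have "map (\<lambda>i. map (\<lambda>x. x ! p) (gen i)) [0..<n] = map (\<lambda>i. if bit p i then bs i else as i) [0..<n]"
      by (intro map_cong) auto
    then have "concat (map (\<lambda>i. map (\<lambda>x. x ! p) (gen i)) [0..<n])
        = concat (map (\<lambda>i. if bit p i then bs i else as i) [0..<n])"
      by (rule arg_cong)
    then show ?thesis unfolding gens_def cube_select_def map_concat map_map o_def .
  qed
  moreover have "map (\<lambda>p. t (map (\<lambda>x. x ! p) gens)) [0..<N] = map (\<lambda>p. t (cube_select as bs n (bit p))) [0..<N]"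
    by (intro map_cong) (auto simp: col)
  ultimately show ?thesis by simp
qed

lemma Delta_term_rep:
  assumes "c \<in> \<Delta>"
  obtains K t dir lo hi where "t \<in> term_ops F K"
    and "\<And>v. v < K \<Longrightarrow> dir v < n \<and> (lo v, hi v) \<in> \<alpha>s ! dir v"
    and "\<And>p. p < N \<Longrightarrow> c ! p = t (map (\<lambda>v. if bit p (dir v) then hi v else lo v) [0..<K])"
proof -
  obtain gs t where gs: "set gs \<subseteq> Gen" and t: "t \<in> term_ops F (length gs)"
    and c: "c = map (\<lambda>p. t (map (\<lambda>g. g ! p) gs)) [0..<N]"
    using sub_gen_term_rep[OF _ assms] Gen_wf by blast
  have "\<forall>v<length gs. \<exists>i x y. gs ! v = cube_vec n i x y \<and> i < n \<and> (x, y) \<in> \<alpha>s ! i"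
    using gs unfolding Gen_def by (auto simp: subset_iff)
  then obtain dir lo hi where dlh: "\<forall>v<length gs. gs ! v = cube_vec n (dir v) (lo v) (hi v) \<and>
      dir v < n \<and> (lo v, hi v) \<in> \<alpha>s ! dir v"
    by metis
  have "c ! p = t (map (\<lambda>v. if bit p (dir v) then hi v else lo v) [0..<length gs])" if "p < N" for p
  proof -
    have "map (\<lambda>g. g ! p) gs = map (\<lambda>v. if bit p (dir v) then hi v else lo v) [0..<length gs]"
      using dlh that by (intro nth_equalityI) (auto simp: nth_cube_vec)
    then show ?thesis using that c by simp
  qed
  then show ?thesis using that[OF t] dlh by blast
qed

lemma cube_select_restrict:
  "cube_select as (\<lambda>i. if \<mu> i then bs i else as i) n s = cube_select as bs n (\<lambda>i. s i \<and> \<mu> i)"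
  unfolding cube_select_def by (intro arg_cong[where f=concat] map_cong) auto

lemma cube_select_restricted_in_Delta:
  assumes "\<forall>i<n. length (as i) = length (bs i) \<and> list_all2 (\<lambda>x y. (x, y) \<in> \<alpha>s ! i) (as i) (bs i)"
    and "t \<in> term_ops F (\<Sum>i<n. length (as i))"
  shows "map (\<lambda>p. t (cube_select as bs n (\<lambda>i. bit p i \<and> \<mu> i))) [0..<N] \<in> \<Delta>"
proof -
  have "\<forall>i<n. length (as i) = length (if \<mu> i then bs i else as i) \<and>
      list_all2 (\<lambda>x y. (x, y) \<in> \<alpha>s ! i) (as i) (if \<mu> i then bs i else as i)"
    using assms(1) by (fastforce simp: list_all2_conv_all_nth intro: \<alpha>_refl dest: \<alpha>_in_carrier)
  from cube_select_in_Delta[OF this assms(2)] show ?thesis by (simp add: cube_select_restrict)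
qed

definition \<alpha>s_except :: "nat \<Rightarrow> ('a \<times> 'a) set list" where
  "\<alpha>s_except j = take j \<alpha>s @ drop (Suc j) \<alpha>s"

definition face :: "nat \<Rightarrow> 'a list \<Rightarrow> 'a list" where
  "face j a = map (\<lambda>k. a ! k) (filter (\<lambda>k. \<not> bit k j) [0..<N])"

lemma length_\<alpha>s_except: "j < n \<Longrightarrow> length (\<alpha>s_except j) = n - 1"
  unfolding \<alpha>s_except_def using length_\<alpha>s by simp

lemma nth_\<alpha>s_except:
  "j < n \<Longrightarrow> i < n - 1 \<Longrightarrow> \<alpha>s_except j ! i = \<alpha>s ! (if i < j then i else Suc i)"
  unfolding \<alpha>s_except_def using length_\<alpha>s by (auto simp: nth_append min_def)

lemma face_eq: "j < n \<Longrightarrow> face j a = map (\<lambda>m. a ! insert_zero_bit j m) [0..<2 ^ (n - 1)]"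
  unfolding face_def by (simp add: filter_zero_bit_eq_map_insert_zero_bit)

lemma face_cube_congruences:
  assumes "j < n" "n \<ge> 2"
  shows "cube_congruences A F (n - 1) (\<alpha>s_except j)"
  using assms alg congs by unfold_locales (auto simp: length_\<alpha>s_except nth_\<alpha>s_except)

lemma Delta_face_dim_0:
  assumes "n = 1" "j < n" "c ! 0 \<in> A"
  shows "face j c \<in> Delta A F (\<alpha>s_except j)"
proof -
  have "face j c = [c ! 0]" using face_eq[OF assms(2)] assms(1,2) by (simp add: insert_zero_bit_def)
  then show ?thesis using assms length_\<alpha>s_except[OF assms(2)] by (simp add: Delta_def)
qed

lemma cube_vec_reindex:
  assumes "\<forall>p<2 ^ n'. \<sigma> p < 2 ^ m \<and> bit (\<sigma> p) i = bit p i'"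
  shows "map (\<lambda>p. cube_vec m i x y ! \<sigma> p) [0..<2 ^ n'] = cube_vec n' i' x y"
  using assms by (intro nth_equalityI) (auto simp: nth_cube_vec)

lemma face_in_Delta:
  assumes c: "c \<in> \<Delta>" and j: "j < n"
  shows "face j c \<in> Delta A F (\<alpha>s_except j)"
proof (cases "n = 1")
  case True
  then show ?thesis using Delta_face_dim_0 Delta_nth_in_carrier[OF c] j by simp
next
  case False
  then have n2: "n \<ge> 2" using n_pos by simp
  interpret face: cube_congruences A F "n - 1" "\<alpha>s_except j"
    by (rule face_cube_congruences[OF j n2])
  have "map (\<lambda>m. c ! insert_zero_bit j m) [0..<2 ^ (n - 1)] \<in> face.\<Delta>"
  proof (rule sub_gen_reindex[OF _ _ _ c])
    show "\<forall>p<2 ^ (n - 1). insert_zero_bit j p < N" using insert_zero_bit_less[OF j] by blast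
    show "\<forall>g\<in>Gen. length g = N" using Gen_wf by blast
    show "\<forall>g\<in>Gen. map (\<lambda>p. g ! insert_zero_bit j p) [0..<2 ^ (n - 1)] \<in> face.\<Delta>"
    proof
      fix g assume "g \<in> Gen"
      then obtain i x y where g: "g = cube_vec n i x y" and i: "i < n" and xy: "(x, y) \<in> \<alpha>s ! i"
        unfolding Gen_def by blast
      show "map (\<lambda>p. g ! insert_zero_bit j p) [0..<2 ^ (n - 1)] \<in> face.\<Delta>"
      proof (cases "i = j")
        case True
        have "map (\<lambda>p. g ! insert_zero_bit j p) [0..<2 ^ (n - 1)] = replicate (2 ^ (n - 1)) x"
          unfolding g using insert_zero_bit_less[OF j] True
          by (intro nth_equalityI) (auto simp: nth_cube_vec bit_insert_zero_bit)
        then show ?thesis using face.replicate_in_Delta \<alpha>_in_carrier[OF i xy] by simp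
      next
        case False
        define i' where "i' = (if i < j then i else i - 1)"
        have i': "i' < n - 1" "\<alpha>s_except j ! i' = \<alpha>s ! i"
          using i j False nth_\<alpha>s_except[OF j] unfolding i'_def by auto
        have "map (\<lambda>p. g ! insert_zero_bit j p) [0..<2 ^ (n - 1)] = cube_vec (n - 1) i' x y"
          unfolding g using insert_zero_bit_less[OF j] False
          by (intro cube_vec_reindex) (auto simp: bit_insert_zero_bit i'_def)
        then show ?thesis using face.cube_vec_in_Delta[OF i'(1)] xy i'(2) by simp
      qed
    qed
  qed
  then show ?thesis using face.Delta_eq by (simp add: face_eq[OF j])
qed

lemma unset_bit_lift_in_Delta:
  assumes a: "length a = N" "set a \<subseteq> A" and j: "j < n"
    and face: "face j a \<in> Delta A F (\<alpha>s_except j)"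
  shows "map (\<lambda>p. a ! unset_bit j p) [0..<N] \<in> \<Delta>"
proof (cases "n = 1")
  case True
  have "unset_bit j p = 0" if "p < N" for p
    using that j True by (auto simp: less_2_cases_iff unset_bit_0)
  then have "map (\<lambda>p. a ! unset_bit j p) [0..<N] = replicate N (a ! 0)"
    by (intro nth_equalityI) auto
  moreover have "a ! 0 \<in> A" using a N_ge_2 nth_mem[of 0 a] by auto
  ultimately show ?thesis using replicate_in_Delta by simp
next
  case False
  then have n2: "n \<ge> 2" using n_pos by simp
  interpret face: cube_congruences A F "n - 1" "\<alpha>s_except j"
    by (rule face_cube_congruences[OF j n2])
  have del: "\<forall>p<N. delete_bit j p < 2 ^ (n - 1)" using delete_bit_less[OF j] by blast
  have "map (\<lambda>p. face j a ! delete_bit j p) [0..<N] \<in> \<Delta>"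
  proof (rule sub_gen_reindex[OF del])
    show "face j a \<in> face.\<Delta>" using face face.Delta_eq by simp
    show "\<forall>g\<in>face.Gen. length g = 2 ^ (n - 1)" using face.Gen_wf by blast
    show "\<forall>g\<in>face.Gen. map (\<lambda>p. g ! delete_bit j p) [0..<N] \<in> \<Delta>"
    proof
      fix g assume "g \<in> face.Gen"
      then obtain i x y where g: "g = cube_vec (n - 1) i x y" and i: "i < n - 1"
        and xy: "(x, y) \<in> \<alpha>s_except j ! i"
        unfolding face.Gen_def by blast
      define i' where "i' = (if i < j then i else Suc i)"
      have i': "i' < n" "(x, y) \<in> \<alpha>s ! i'"
        using i xy nth_\<alpha>s_except[OF j i] unfolding i'_def by auto
      have "map (\<lambda>p. g ! delete_bit j p) [0..<N] = cube_vec n i' x y"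
        unfolding g using del by (intro cube_vec_reindex) (auto simp: bit_delete_bit i'_def)
      then show "map (\<lambda>p. g ! delete_bit j p) [0..<N] \<in> \<Delta>" using cube_vec_in_Delta[OF i'] by simp
    qed
  qed
  moreover have "face j a ! delete_bit j p = a ! unset_bit j p" if "p < N" for p
    using del that by (simp add: face_eq[OF j] insert_zero_bit_delete_bit)
  ultimately show ?thesis by (metis (no_types, lifting) atLeastLessThan_iff map_cong set_upt)
qed

lemma and_lift_in_Delta:
  assumes lifts: "\<forall>i<n. map (\<lambda>p. a ! unset_bit i p) [0..<N] \<in> \<Delta>" and j: "j < N - 1"
  shows "map (\<lambda>p. a ! and p j) [0..<N] \<in> \<Delta>"
proof -
  obtain i where i: "i < n" "\<not> bit j i" using less_power2_minus_1_obtains_zero_bit j by blast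
  have mem: "map (\<lambda>p. map (\<lambda>p. a ! unset_bit i p) [0..<N] ! and p j) [0..<N] \<in> \<Delta>"
  proof (rule Delta_reindex)
    show "\<forall>i<n. (\<forall>p<N. bit (and p j) i = bit p i) \<or> (\<forall>p<N. \<not> bit (and p j) i) \<or>
        (\<forall>p<N. bit (and p j) i) \<or> (\<forall>p<N. bit (and p j) i = (\<not> bit p i))"
      by (auto simp: bit_and_iff)
  qed (use and_less_power2 lifts i in auto)
  have "unset_bit i (and p j) = and p j" for p
    using i by (intro bit_eqI) (auto simp: bit_unset_bit_iff bit_and_iff)
  then have "map (\<lambda>p. map (\<lambda>p. a ! unset_bit i p) [0..<N] ! and p j) [0..<N] = map (\<lambda>p. a ! and p j) [0..<N]"
    using and_less_power2 by (intro map_cong) auto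
  then show ?thesis using mem by metis
qed

end

section \<open>The corner congruence\<close>

locale cube_algebra = cube_congruences +
  fixes q :: "'a list \<Rightarrow> 'a"
  assumes malcev: "has_malcev A F" and cube: "strong_cube_term A F n q"
begin

definition m :: "'a list \<Rightarrow> 'a" where
  "m = (SOME m. m \<in> term_ops F 3 \<and> (\<forall>x\<in>A. \<forall>y\<in>A. m [x, x, y] = y \<and> m [y, x, x] = y))"

lemma m_term: "m \<in> term_ops F 3"
  and m_left: "x \<in> A \<Longrightarrow> y \<in> A \<Longrightarrow> m [x, x, y] = y"
  and m_right: "x \<in> A \<Longrightarrow> y \<in> A \<Longrightarrow> m [y, x, x] = y"
proof -
  have "\<exists>m. m \<in> term_ops F 3 \<and> (\<forall>x\<in>A. \<forall>y\<in>A. m [x, x, y] = y \<and> m [y, x, x] = y)"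
    using malcev unfolding has_malcev_def by blast
  then have "m \<in> term_ops F 3 \<and> (\<forall>x\<in>A. \<forall>y\<in>A. m [x, x, y] = y \<and> m [y, x, x] = y)"
    unfolding m_def by (rule someI_ex)
  then show "m \<in> term_ops F 3" "x \<in> A \<Longrightarrow> y \<in> A \<Longrightarrow> m [x, x, y] = y"
    "x \<in> A \<Longrightarrow> y \<in> A \<Longrightarrow> m [y, x, x] = y"
    by auto
qed

lemma q_term: "q \<in> term_ops F (N - 1)"
  using cube unfolding strong_cube_term_def by blast

lemma q_cube:
  assumes "i < n" "\<forall>k<N. y k \<in> A" "\<forall>k<N. y (unset_bit i k) = y k"
  shows "q (map y [0..<N - 1]) = y (N - 1)"
proof -
  \<comment> \<open>the definition quantifies over families on all of \<open>nat\<close>: extend \<open>y\<close> periodically\<close>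
  define y' where "y' k = y (take_bit n k)" for k
  have y': "y' (unset_bit i k) = y k" if "k < N" for k
    using assms(1,3) that take_bit_nat_less_exp[of n k]
    by (simp add: y'_def take_bit_unset_bit_eq take_bit_nat_eq_self)
  have "q (map y [0..<N - 1]) = q (map (\<lambda>k. y' (unset_bit i k)) [0..<N - 1])"
    using y' by (intro arg_cong[where f=q] map_cong) auto
  also have "\<dots> = y' (unset_bit i (N - 1))"
  proof -
    have "\<forall>k. y' k \<in> A" using assms(2) take_bit_nat_less_exp unfolding y'_def by blast
    then show ?thesis using cube assms(1) unfolding strong_cube_term_def by blast
  qed
  also have "\<dots> = y (N - 1)" using y' by simp
  finally show ?thesis .
qed

lemma q_idem: "x \<in> A \<Longrightarrow> q (replicate (N - 1) x) = x"
  using q_cube[of 0 "\<lambda>_. x"] n_pos by (simp add: map_replicate_const)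

lemma m_in_Delta:
  "u \<in> \<Delta> \<Longrightarrow> v \<in> \<Delta> \<Longrightarrow> w \<in> \<Delta> \<Longrightarrow> map (\<lambda>p. m [u ! p, v ! p, w ! p]) [0..<N] \<in> \<Delta>"
  using Delta_term_closed[OF m_term, of "[u, v, w]"] by simp

definition corner :: "'a \<Rightarrow> 'a \<Rightarrow> 'a list" where
  "corner x y = replicate (N - 1) x @ [y]"

lemma length_corner [simp]: "length (corner x y) = N"
  using N_ge_2 unfolding corner_def by simp

lemma nth_corner: "p < N \<Longrightarrow> corner x y ! p = (if p < N - 1 then x else y)"
  unfolding corner_def by (auto simp: nth_append)

lemma corner_eqI:
  assumes "length c = N" "\<And>p. p < N - 1 \<Longrightarrow> c ! p = x" "c ! (N - 1) = y"
  shows "c = corner x y"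
proof (rule nth_equalityI)
  fix p assume "p < length c"
  then consider "p < N - 1" | "p = N - 1" using assms(1) by linarith
  then show "c ! p = corner x y ! p" using assms N_ge_2 by cases (auto simp: nth_corner)
qed (use assms(1) in simp)

definition corner_rel :: "('a \<times> 'a) set" where
  "corner_rel = {(x, y). x \<in> A \<and> y \<in> A \<and> corner x y \<in> \<Delta>}"

lemma corner_rel_refl: "x \<in> A \<Longrightarrow> (x, x) \<in> corner_rel"
proof -
  assume x: "x \<in> A"
  have "corner x x = replicate N x" by (rule nth_equalityI) (auto simp: nth_corner)
  then show ?thesis using replicate_in_Delta[OF x] x unfolding corner_rel_def by simp
qed

lemma corner_rel_term:
  assumes "t \<in> term_ops F k" "length xs = k" "length ys = k"
    and "list_all2 (\<lambda>x y. (x, y) \<in> corner_rel) xs ys"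
  shows "(t xs, t ys) \<in> corner_rel"
proof -
  define cs where "cs = map2 corner xs ys"
  have A: "set xs \<subseteq> A" "set ys \<subseteq> A" and D: "set cs \<subseteq> \<Delta>"
    using assms(4) unfolding cs_def corner_rel_def list_all2_conv_all_nth by (auto simp: in_set_conv_nth)
  have "map (\<lambda>p. t (map (\<lambda>c. c ! p) cs)) [0..<N] \<in> \<Delta>"
    using Delta_term_closed[OF assms(1) _ D] assms(2,3) by (simp add: cs_def)
  moreover have "map (\<lambda>p. t (map (\<lambda>c. c ! p) cs)) [0..<N] = corner (t xs) (t ys)"
  proof (rule corner_eqI)
    have "map (\<lambda>c. c ! p) cs = (if p < N - 1 then xs else ys)" if "p < N" for p
      using assms(2,3) that by (intro nth_equalityI) (auto simp: cs_def nth_corner)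
    then show "\<And>p. p < N - 1 \<Longrightarrow> map (\<lambda>p. t (map (\<lambda>c. c ! p) cs)) [0..<N] ! p = t xs"
      "map (\<lambda>p. t (map (\<lambda>c. c ! p) cs)) [0..<N] ! (N - 1) = t ys"
      using N_ge_2 by auto
  qed simp
  moreover have "t xs \<in> A" "t ys \<in> A" using term_ops_closed[OF alg assms(1)] assms(2,3) A by auto
  ultimately show ?thesis unfolding corner_rel_def by simp
qed

lemma corner_rel_m:
  "(x1, y1) \<in> corner_rel \<Longrightarrow> (x2, y2) \<in> corner_rel \<Longrightarrow> (x3, y3) \<in> corner_rel \<Longrightarrow>
    (m [x1, x2, x3], m [y1, y2, y3]) \<in> corner_rel"
  by (rule corner_rel_term[OF m_term]) auto

lemma corner_rel_in_carrier: "(x, y) \<in> corner_rel \<Longrightarrow> x \<in> A \<and> y \<in> A"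
  unfolding corner_rel_def by blast

lemma corner_rel_sym:
  assumes "(x, y) \<in> corner_rel"
  shows "(y, x) \<in> corner_rel"
proof -
  have A: "x \<in> A" "y \<in> A" using assms corner_rel_in_carrier by auto
  have "(m [y, x, x], m [y, y, x]) \<in> corner_rel"
    using corner_rel_m[OF corner_rel_refl[OF A(2)] assms corner_rel_refl[OF A(1)]] .
  then show ?thesis using A by (simp add: m_left m_right)
qed

lemma corner_rel_trans:
  assumes "(x, y) \<in> corner_rel" "(y, z) \<in> corner_rel"
  shows "(x, z) \<in> corner_rel"
proof -
  have A: "x \<in> A" "y \<in> A" "z \<in> A" using assms corner_rel_in_carrier by auto
  have "(m [x, y, y], m [y, y, z]) \<in> corner_rel"
    using corner_rel_m[OF assms(1) corner_rel_refl[OF A(2)] assms(2)] .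
  then show ?thesis using A by (simp add: m_left m_right)
qed

lemma basic_op_term_ops:
  assumes "(k, f) \<in> F"
  shows "(\<lambda>xs. f (map (\<lambda>i. xs ! i) [0..<k])) \<in> term_ops F k"
proof -
  have "(\<lambda>xs. f (map (\<lambda>g. g xs) (map (\<lambda>i xs. xs ! i) [0..<k]))) \<in> term_ops F k"
    by (rule term_ops.comp[OF assms]) (auto intro: term_ops.proj)
  then show ?thesis by (simp add: o_def)
qed

lemma congruence_corner_rel: "congruence A F corner_rel"
proof (rule congruenceI[OF _ corner_rel_refl corner_rel_sym corner_rel_trans])
  show "corner_rel \<subseteq> A \<times> A" using corner_rel_in_carrier by auto
next
  fix k f xs ys assume f: "(k, f) \<in> F" and len: "length xs = k" "length ys = k"
    and rel: "list_all2 (\<lambda>x y. (x, y) \<in> corner_rel) xs ys"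
  have "(f (map (\<lambda>i. xs ! i) [0..<k]), f (map (\<lambda>i. ys ! i) [0..<k])) \<in> corner_rel"
    using corner_rel_term[OF basic_op_term_ops[OF f] len rel] .
  then show "(f xs, f ys) \<in> corner_rel" using len map_nth by metis
qed

lemma bit_less_N: "p < N \<Longrightarrow> bit p i \<Longrightarrow> i < n"
  by (meson less_power2_iff_bits not_less)

definition reflect_join :: "nat \<Rightarrow> nat \<Rightarrow> nat" where
  "reflect_join j p = or j (xor (N - 1) p)"

lemma bit_reflect_join: "bit (reflect_join j p) i \<longleftrightarrow> bit j i \<or> (i < n) \<noteq> bit p i"
  unfolding reflect_join_def bit_or_iff bit_xor_iff by simp

lemma reflect_join_less: "j < N \<Longrightarrow> p < N \<Longrightarrow> reflect_join j p < N"
  unfolding less_power2_iff_bits bit_reflect_join by auto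

lemma reflect_join_in_Delta:
  assumes c: "c \<in> \<Delta>" and j: "j < N"
  shows "map (\<lambda>p. c ! reflect_join j p) [0..<N] \<in> \<Delta>"
  using j by (intro Delta_reindex[OF _ _ c]) (auto simp: reflect_join_less bit_reflect_join)

lemma q_reflect_join_below:
  assumes c: "c \<in> \<Delta>" and p: "p < N - 1"
  shows "q (map (\<lambda>j. c ! reflect_join j p) [0..<N - 1]) = c ! (N - 1)"
proof -
  obtain i0 where i0: "i0 < n" "\<not> bit p i0"
    using less_power2_minus_1_obtains_zero_bit[of p n] p by auto
  have "reflect_join (unset_bit i0 k) p = reflect_join k p" for k
    using i0 by (intro bit_eqI) (auto simp: bit_reflect_join bit_unset_bit_iff)
  moreover have "reflect_join (N - 1) p = N - 1"
    using p bit_less_N[of p] by (intro bit_eqI) (auto simp: bit_reflect_join)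
  moreover have "\<forall>k<N. c ! reflect_join k p \<in> A"
    using Delta_nth_in_carrier[OF c] reflect_join_less p by simp
  ultimately show ?thesis using q_cube[OF i0(1), of "\<lambda>j. c ! reflect_join j p"] by simp
qed

lemma reflect_join_top [simp]: "j < N \<Longrightarrow> reflect_join j (N - Suc 0) = j"
  using bit_less_N[of j] by (intro bit_eqI) (auto simp: bit_reflect_join)

lemma top_corner_rel:
  assumes c: "c \<in> \<Delta>"
  shows "(c ! (N - 1), q (take (N - 1) c)) \<in> corner_rel"
proof -
  define Y where "Y = map (\<lambda>p. q (map (\<lambda>x. x ! p)
    (map (\<lambda>j. map (\<lambda>p. c ! reflect_join j p) [0..<N]) [0..<N - 1]))) [0..<N]"
  have Y_nth: "Y ! p = q (map (\<lambda>j. c ! reflect_join j p) [0..<N - 1])" if "p < N" for p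
    using that unfolding Y_def by (simp add: o_def)
  have "Y \<in> \<Delta>" unfolding Y_def by (intro Delta_term_closed[OF q_term]) (auto intro: reflect_join_in_Delta[OF c])
  moreover have "Y = corner (c ! (N - 1)) (q (take (N - 1) c))"
  proof (rule corner_eqI)
    show "Y ! p = c ! (N - 1)" if "p < N - 1" for p
      using that Y_nth q_reflect_join_below[OF c that] by simp
    have "map (\<lambda>j. c ! reflect_join j (N - 1)) [0..<N - 1] = take (N - 1) c"
      using length_Delta[OF c] by (simp add: take_eq_map_nth)
    then show "Y ! (N - 1) = q (take (N - 1) c)" using Y_nth[of "N - 1"] by simp
  qed (simp add: Y_def)
  moreover have "q (take (N - 1) c) \<in> A"
    using c length_Delta Delta_nth_in_carrier
    by (intro term_ops_closed[OF alg q_term]) (auto simp: in_set_conv_nth)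
  ultimately show ?thesis
    using Delta_nth_in_carrier[OF c, of "N - 1"] unfolding corner_rel_def by simp
qed

lemma corner_rel_top_if_below:
  assumes w: "w \<in> \<Delta>" and x: "x \<in> A" and below: "\<forall>p<N - 1. (w ! p, x) \<in> corner_rel"
  shows "(w ! (N - 1), x) \<in> corner_rel"
proof -
  have "(q (take (N - 1) w), q (replicate (N - 1) x)) \<in> corner_rel"
    using below length_Delta[OF w]
    by (intro corner_rel_term[OF q_term]) (auto simp: list_all2_conv_all_nth)
  then show ?thesis
    using corner_rel_trans[OF top_corner_rel[OF w]] q_idem[OF x] by simp
qed

lemma corner_rel_top_if_below_pairs:
  assumes u: "u \<in> \<Delta>" and v: "v \<in> \<Delta>" and below: "\<forall>p<N - 1. (u ! p, v ! p) \<in> corner_rel"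
  shows "(u ! (N - 1), v ! (N - 1)) \<in> corner_rel"
proof -
  define x where "x = v ! (N - 1)"
  have x: "x \<in> A" unfolding x_def using Delta_nth_in_carrier[OF v] N_ge_2 by simp
  define w where "w = map (\<lambda>p. m [u ! p, v ! p, replicate N x ! p]) [0..<N]"
  have w_nth: "w ! p = m [u ! p, v ! p, x]" if "p < N" for p
    using that by (simp add: w_def)
  have "w \<in> \<Delta>" unfolding w_def by (intro m_in_Delta u v replicate_in_Delta x)
  moreover have "(w ! p, x) \<in> corner_rel" if p: "p < N - 1" for p
  proof -
    have "v ! p \<in> A" using Delta_nth_in_carrier[OF v] p by simp
    then have "(m [u ! p, v ! p, x], m [v ! p, v ! p, x]) \<in> corner_rel"
      using below p x by (intro corner_rel_m corner_rel_refl) auto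
    then show ?thesis using p w_nth \<open>v ! p \<in> A\<close> x by (simp add: m_left)
  qed
  ultimately have "(w ! (N - 1), x) \<in> corner_rel" using x by (intro corner_rel_top_if_below) auto
  moreover have "w ! (N - 1) = u ! (N - 1)"
    using w_nth[of "N - 1"] N_ge_2 x Delta_nth_in_carrier[OF u, of "N - 1"] by (simp add: x_def m_right)
  ultimately show ?thesis unfolding x_def by simp
qed

lemma centralizes_corner_rel: "centralizes A F \<alpha>s corner_rel"
  unfolding centralizes_iff_cube_select[OF length_\<alpha>s n_pos]
proof (intro allI impI)
  fix as bs t
  assume pairs: "cube_pairs A \<alpha>s as bs" and t: "t \<in> term_ops F (\<Sum>i<n. length (as i))"
    and hyp: "\<forall>s. \<not> (\<forall>i<n - 1. s i) \<longrightarrow>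
      (t (cube_select as bs n (s(n - 1 := False))), t (cube_select as bs n (s(n - 1 := True)))) \<in> corner_rel"
  define T where "T s = t (cube_select as bs n s)" for s
  have pairs': "\<forall>i<n. length (as i) = length (bs i) \<and> list_all2 (\<lambda>x y. (x, y) \<in> \<alpha>s ! i) (as i) (bs i)"
    using pairs length_\<alpha>s unfolding cube_pairs_def by simp
  have T_A: "T s \<in> A" for s
    using pairs length_\<alpha>s unfolding T_def cube_pairs_def
    by (intro term_ops_closed[OF alg t length_cube_select]) (auto simp: cube_select_def)
  have T_cong: "T s = T s'" if "\<And>i. i < n \<Longrightarrow> s i = s' i" for s s'
    unfolding T_def using that by (metis cube_select_cong)
  define C where "C \<mu> = map (\<lambda>p. T (\<lambda>i. bit p i \<and> \<mu> i)) [0..<N]" for \<mu>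
  have C_nth: "C \<mu> ! p = T (\<lambda>i. bit p i \<and> \<mu> i)" if "p < N" for \<mu> p
    using that by (simp add: C_def)
  have "C \<mu> \<in> \<Delta>" for \<mu>
    unfolding C_def T_def by (rule cube_select_restricted_in_Delta[OF pairs' t])
  moreover have "(C (\<lambda>_. True) ! p, C (\<lambda>i. i \<noteq> n - 1) ! p) \<in> corner_rel" if p: "p < N - 1" for p
  proof (cases "bit p (n - 1)")
    case False
    then have "T (\<lambda>i. bit p i \<and> True) = T (\<lambda>i. bit p i \<and> i \<noteq> n - 1)" by (intro T_cong) auto
    then show ?thesis using p C_nth T_A by (simp add: corner_rel_refl)
  next
    case True
    obtain i where "i < n" "\<not> bit p i" using less_power2_minus_1_obtains_zero_bit p by blast
    then have "\<not> (\<forall>i<n - 1. bit p i)" using True by (metis less_SucE Suc_pred' n_pos less_le_trans zero_less_one)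
    then have "(T ((bit p)(n - 1 := False)), T ((bit p)(n - 1 := True))) \<in> corner_rel"
      using hyp unfolding T_def by blast
    moreover have "(bit p)(n - 1 := False) = (\<lambda>i. bit p i \<and> i \<noteq> n - 1)"
      and "(bit p)(n - 1 := True) = (\<lambda>i. bit p i \<and> True)"
      using True by (auto split: if_splits)
    ultimately show ?thesis using p C_nth corner_rel_sym by simp
  qed
  ultimately have "(C (\<lambda>_. True) ! (N - 1), C (\<lambda>i. i \<noteq> n - 1) ! (N - 1)) \<in> corner_rel"
    by (intro corner_rel_top_if_below_pairs) auto
  moreover have "C (\<lambda>_. True) ! (N - 1) = T (\<lambda>_. True)" "C (\<lambda>i. i \<noteq> n - 1) ! (N - 1) = T (\<lambda>i. i \<noteq> n - 1)"
    using N_ge_2 C_nth by (auto intro: T_cong)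
  ultimately show "(t (cube_select as bs n (\<lambda>i. i \<noteq> n - 1)), t (cube_select as bs n (\<lambda>_. True))) \<in> corner_rel"
    using corner_rel_sym unfolding T_def by simp
qed

lemma commutator_subset_corner_rel: "commutator A F \<alpha>s \<subseteq> corner_rel"
  unfolding commutator_def using congruence_corner_rel centralizes_corner_rel by blast

section \<open>Sufficiency\<close>

text \<open>The witness is \<open>q\<close> applied to the tuples \<open>(a\<^sub>p AND j)\<^sub>p\<close>, \<open>j < N - 1\<close>.\<close>

lemma replace_top_in_Delta:
  assumes a: "length a = N" "set a \<subseteq> A"
    and lifts: "\<forall>i<n. map (\<lambda>p. a ! unset_bit i p) [0..<N] \<in> \<Delta>"
  shows "take (N - 1) a @ [q (take (N - 1) a)] \<in> \<Delta>"
proof -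
  have a_A: "a ! p \<in> A" if "p < N" for p using a that by (metis nth_mem subsetD)
  define b where "b = map (\<lambda>p. q (map (\<lambda>x. x ! p) (map (\<lambda>j. map (\<lambda>p. a ! and p j) [0..<N]) [0..<N - 1]))) [0..<N]"
  have "b \<in> \<Delta>"
    unfolding b_def
  proof (rule Delta_term_closed[OF q_term])
    show "set (map (\<lambda>j. map (\<lambda>p. a ! and p j) [0..<N]) [0..<N - 1]) \<subseteq> \<Delta>"
      using and_lift_in_Delta[OF lifts] by auto
  qed simp
  have b_nth: "b ! p = q (map (\<lambda>j. a ! and p j) [0..<N - 1])" if "p < N" for p
    using that and_less_power2 unfolding b_def by (simp add: o_def)
  have "b = take (N - 1) a @ [q (take (N - 1) a)]"
  proof (rule nth_equalityI)
    fix p assume "p < length b"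
    then consider "p < N - 1" | "p = N - 1" unfolding b_def by fastforce
    then show "b ! p = (take (N - 1) a @ [q (take (N - 1) a)]) ! p"
    proof cases
      case 1
      obtain i where i: "i < n" "\<not> bit p i" using less_power2_minus_1_obtains_zero_bit 1 by blast
      have "and p (unset_bit i k) = and p k" for k
        using i by (intro bit_eqI) (auto simp: bit_unset_bit_iff bit_and_iff)
      moreover have "and p (N - 1) = p"
        using 1 bit_less_N[of p] by (intro bit_eqI) (auto simp: bit_and_iff)
      ultimately have "q (map (\<lambda>j. a ! and p j) [0..<N - 1]) = a ! p"
        using q_cube[OF i(1), of "\<lambda>j. a ! and p j"] a_A and_less_power2 1 by simp
      then show ?thesis using 1 b_nth a(1) by (simp add: nth_append)
    next
      case 2
      have "and (N - 1) j = j" if "j < N" for j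
        using that bit_less_N[of j] by (intro bit_eqI) (auto simp: bit_and_iff)
      then have "map (\<lambda>j. a ! and (N - 1) j) [0..<N - 1] = take (N - 1) a"
        using a(1) by (simp add: take_eq_map_nth)
      then show ?thesis using 2 b_nth a(1) N_ge_2 by (simp add: nth_append)
    qed
  qed (simp add: b_def a(1))
  then show ?thesis using \<open>b \<in> \<Delta>\<close> by simp
qed

lemma Delta_if_faces_and_commutator:
  assumes a: "length a = N" "set a \<subseteq> A"
    and faces: "\<forall>j<n. face j a \<in> Delta A F (\<alpha>s_except j)"
    and comm: "(q (take (N - 1) a), a ! (N - 1)) \<in> commutator A F \<alpha>s"
  shows "a \<in> \<Delta>"
proof -
  define x where "x = q (take (N - 1) a)"
  define b where "b = take (N - 1) a @ [x]"
  have a_A: "a ! p \<in> A" if "p < N" for p using a that by (metis nth_mem subsetD)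
  have "b \<in> \<Delta>"
    unfolding b_def x_def using unset_bit_lift_in_Delta[OF a] faces by (intro replace_top_in_Delta[OF a]) blast
  moreover have "corner x (a ! (N - 1)) \<in> \<Delta>" and x: "x \<in> A"
    using comm commutator_subset_corner_rel unfolding corner_rel_def x_def by blast+
  ultimately have "map (\<lambda>p. m [b ! p, replicate N x ! p, corner x (a ! (N - 1)) ! p]) [0..<N] \<in> \<Delta>"
    by (intro m_in_Delta replicate_in_Delta)
  moreover have "map (\<lambda>p. m [b ! p, replicate N x ! p, corner x (a ! (N - 1)) ! p]) [0..<N] = a"
  proof (rule nth_equalityI)
    fix p assume "p < length (map (\<lambda>p. m [b ! p, replicate N x ! p, corner x (a ! (N - 1)) ! p]) [0..<N])"
    then consider "p < N - 1" | "p = N - 1" by fastforce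
    then show "map (\<lambda>p. m [b ! p, replicate N x ! p, corner x (a ! (N - 1)) ! p]) [0..<N] ! p = a ! p"
      by cases (use a N_ge_2 x a_A in \<open>auto simp: b_def x_def nth_append nth_corner m_left m_right\<close>)
  qed (simp add: a(1))
  ultimately show ?thesis by simp
qed

end

section \<open>Necessity\<close>

text \<open>An element of \<open>\<Delta>\<close>, written as a term \<open>t\<close> applied to \<open>K\<close> generators: generator
  \<open>v\<close> moves from \<open>lo v\<close> to \<open>hi v\<close> along direction \<open>dir v\<close>.\<close>

locale cube_term = cube_algebra +
  fixes K :: nat and t :: "'a list \<Rightarrow> 'a" and dir :: "nat \<Rightarrow> nat" and lo hi :: "nat \<Rightarrow> 'a"
  assumes t_term: "t \<in> term_ops F K"
    and dir_less: "\<And>v. v < K \<Longrightarrow> dir v < n"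
    and lo_hi: "\<And>v. v < K \<Longrightarrow> (lo v, hi v) \<in> \<alpha>s ! dir v"
begin

definition val :: "(nat \<Rightarrow> bool) \<Rightarrow> 'a" where
  "val s = t (map (\<lambda>v. if s (dir v) then hi v else lo v) [0..<K])"

definition qval :: "(nat \<Rightarrow> bool) \<Rightarrow> 'a" where
  "qval s = q (map (\<lambda>j. val (\<lambda>i. bit j i \<and> s i)) [0..<N - 1])"

lemma lo_in_carrier: "v < K \<Longrightarrow> lo v \<in> A"
  and hi_in_carrier: "v < K \<Longrightarrow> hi v \<in> A"
  using lo_hi dir_less \<alpha>_in_carrier by blast+

lemma val_in_carrier: "val s \<in> A"
  unfolding val_def
  by (rule term_ops_closed[OF alg t_term]) (auto simp: lo_in_carrier hi_in_carrier)

lemma qval_in_carrier: "qval s \<in> A"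
  unfolding qval_def by (rule term_ops_closed[OF alg q_term]) (auto simp: val_in_carrier)

lemma val_cong: "(\<And>i. i < n \<Longrightarrow> s i = s' i) \<Longrightarrow> val s = val s'"
  unfolding val_def using dir_less by (intro arg_cong[where f=t] map_cong) auto

lemma qval_eq_val_if_independent:
  assumes "i0 < n" "\<And>k::nat. val (\<lambda>i. bit (unset_bit i0 k) i \<and> s i) = val (\<lambda>i. bit k i \<and> s i)"
  shows "qval s = val s"
proof -
  have "qval s = val (\<lambda>i. bit (N - 1) i \<and> s i)"
    unfolding qval_def using val_in_carrier
    by (intro q_cube[OF assms(1), of "\<lambda>j. val (\<lambda>i. bit j i \<and> s i)"] allI impI assms(2)) blast
  also have "\<dots> = val s" by (rule val_cong) simp
  finally show ?thesis .
qed

lemma qval_eq_val_if_unselected: "i0 < n \<Longrightarrow> \<not> s i0 \<Longrightarrow> qval s = val s"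
  by (rule qval_eq_val_if_independent) (auto intro!: val_cong simp: bit_unset_bit_iff)

lemma qval_eq_val_if_degenerate:
  assumes "i0 < n" "\<And>v. v < K \<Longrightarrow> dir v = i0 \<Longrightarrow> lo v = hi v"
  shows "qval s = val s"
proof (rule qval_eq_val_if_independent[OF assms(1)])
  fix k :: nat
  show "val (\<lambda>i. bit (unset_bit i0 k) i \<and> s i) = val (\<lambda>i. bit k i \<and> s i)"
    unfolding val_def using assms(2) by (intro arg_cong[where f=t] map_cong) (auto simp: bit_unset_bit_iff)
qed

text \<open>To feed the term condition, every coordinate direction \<open>i\<close> gets a block of
  \<open>2K + 1\<close> entries: the generator values (\<open>hi v\<close> exactly when \<open>dir v = i\<close> is selected),
  a spare copy of all \<open>lo v\<close>, and a constant \<open>e\<close>.\<close>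

definition B :: nat where "B = 2 * K + 1"

definition lo_block :: "'a \<Rightarrow> nat \<Rightarrow> 'a list" where
  "lo_block e i = map lo [0..<K] @ map lo [0..<K] @ [e]"

definition hi_block :: "'a \<Rightarrow> nat \<Rightarrow> 'a list" where
  "hi_block e i = map (\<lambda>v. if dir v = i then hi v else lo v) [0..<K] @ map lo [0..<K] @ [e]"

definition enc :: "'a list \<Rightarrow> 'a" where
  "enc xs = m [t (map (\<lambda>v. xs ! (dir v * B + v)) [0..<K]),
     q (map (\<lambda>j. t (map (\<lambda>v. xs ! (dir v * B + (if bit j (dir v) then v else K + v))) [0..<K])) [0..<N - 1]),
     xs ! (2 * K)]"

lemma length_blocks [simp]: "length (lo_block e i) = B" "length (hi_block e i) = B"
  unfolding lo_block_def hi_block_def B_def by simp_all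

lemma nth_cube_select_blocks:
  fixes s :: "nat \<Rightarrow> bool" and e :: 'a
  defines "X \<equiv> cube_select (lo_block e) (hi_block e) n s"
  shows "v < K \<Longrightarrow> X ! (dir v * B + v) = (if s (dir v) then hi v else lo v)"
    and "v < K \<Longrightarrow> X ! (dir v * B + (K + v)) = lo v"
    and "X ! (2 * K) = e"
proof -
  have X: "X ! (i * B + r) = (if s i then hi_block e i else lo_block e i) ! r" if "i < n" "r < B" for i r
    unfolding X_def cube_select_def using that by (intro nth_concat_uniform) auto
  show "v < K \<Longrightarrow> X ! (dir v * B + v) = (if s (dir v) then hi v else lo v)"
    using X[OF dir_less, of v v] by (simp add: B_def lo_block_def hi_block_def nth_append)
  show "v < K \<Longrightarrow> X ! (dir v * B + (K + v)) = lo v"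
    using X[OF dir_less, of v "K + v"] by (simp add: B_def lo_block_def hi_block_def nth_append)
  show "X ! (2 * K) = e"
    using X[of 0 "2 * K"] n_pos by (simp add: B_def lo_block_def hi_block_def nth_append)
qed

lemma enc_cube_select: "enc (cube_select (lo_block e) (hi_block e) n s) = m [val s, qval s, e]"
proof -
  let ?X = "cube_select (lo_block e) (hi_block e) n s"
  have eq1: "map (\<lambda>v. ?X ! (dir v * B + v)) [0..<K] = map (\<lambda>v. if s (dir v) then hi v else lo v) [0..<K]"
    by (intro map_cong) (auto simp: nth_cube_select_blocks)
  have eq2: "map (\<lambda>v. ?X ! (dir v * B + (if bit j (dir v) then v else K + v))) [0..<K]
      = map (\<lambda>v. if bit j (dir v) \<and> s (dir v) then hi v else lo v) [0..<K]" for j :: nat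
    by (intro map_cong) (auto simp: nth_cube_select_blocks)
  show ?thesis
    unfolding enc_def val_def qval_def nth_cube_select_blocks(3) eq1 eq2 ..
qed

lemma enc_term: "enc \<in> term_ops F (\<Sum>i<n. length (lo_block e i))"
proof -
  have idx: "dir v * B + v < n * B" "dir v * B + (K + v) < n * B" if "v < K" for v
  proof -
    have "v < B" "K + v < B" using that by (simp_all add: B_def)
    then show "dir v * B + v < n * B" "dir v * B + (K + v) < n * B"
      using mult_add_less_mult[OF dir_less[OF that]] by blast+
  qed
  have sel: "(\<lambda>xs. t (map (\<lambda>v. xs ! (dir v * B + (if b v then v else K + v))) [0..<K])) \<in> term_ops F (n * B)"
    for b :: "nat \<Rightarrow> bool"
    by (rule term_ops_reindex[OF t_term]) (simp add: idx)
  have "(\<lambda>xs. q (map (\<lambda>g. g xs)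
      (map (\<lambda>j xs. t (map (\<lambda>v. xs ! (dir v * B + (if bit j (dir v) then v else K + v))) [0..<K])) [0..<N - 1])))
      \<in> term_ops F (n * B)"
    by (rule term_ops_compose[OF q_term]) (auto intro: sel)
  moreover have "2 * K < n * B" using mult_add_less_mult[of 0 n "2 * K" B] n_pos by (simp add: B_def)
  ultimately have "(\<lambda>xs. m (map (\<lambda>g. g xs) [\<lambda>xs. t (map (\<lambda>v. xs ! (dir v * B + v)) [0..<K]),
      \<lambda>xs. q (map (\<lambda>j. t (map (\<lambda>v. xs ! (dir v * B + (if bit j (dir v) then v else K + v))) [0..<K])) [0..<N - 1]),
      \<lambda>xs. xs ! (2 * K)])) \<in> term_ops F (n * B)"
    using sel[of "\<lambda>_. True"] by (intro term_ops_compose[OF m_term]) (auto simp: o_def intro: term_ops.proj)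
  then show ?thesis unfolding enc_def by simp
qed

lemma cube_pairs_blocks:
  assumes "e \<in> A" and nondeg: "\<And>i. i < n \<Longrightarrow> \<exists>v<K. dir v = i \<and> lo v \<noteq> hi v"
  shows "cube_pairs A \<alpha>s (lo_block e) (hi_block e)"
  unfolding cube_pairs_def length_\<alpha>s
proof (intro allI impI conjI)
  fix i assume i: "i < n"
  show "length (lo_block e i) = length (hi_block e i)" by simp
  show "set (lo_block e i) \<subseteq> A" "set (hi_block e i) \<subseteq> A"
    using assms(1) lo_in_carrier hi_in_carrier by (auto simp: lo_block_def hi_block_def)
  obtain v where "v < K" "dir v = i" "lo v \<noteq> hi v" using nondeg[OF i] by blast
  then have "lo_block e i ! v \<noteq> hi_block e i ! v" by (simp add: lo_block_def hi_block_def nth_append)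
  then show "lo_block e i \<noteq> hi_block e i" by metis
  show "list_all2 (\<lambda>x y. (x, y) \<in> \<alpha>s ! i) (lo_block e i) (hi_block e i)"
    using lo_hi \<alpha>_refl[OF i] lo_in_carrier assms(1)
    by (auto simp: lo_block_def hi_block_def list_all2_conv_all_nth nth_append)
qed

lemma commutator_top_nondegenerate:
  assumes \<gamma>: "congruence A F \<gamma>" "centralizes A F \<alpha>s \<gamma>"
    and nondeg: "\<And>i. i < n \<Longrightarrow> \<exists>v<K. dir v = i \<and> lo v \<noteq> hi v"
  shows "(qval (\<lambda>_. True), val (\<lambda>_. True)) \<in> \<gamma>"
proof -
  \<comment> \<open>\<open>enc\<close> is \<open>e\<close> on every selector with a zero coordinate, and \<open>val (\<lambda>_. True)\<close> on the top one\<close>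
  define e where "e = qval (\<lambda>_. True)"
  have e: "e \<in> A" unfolding e_def by (rule qval_in_carrier)
  have enc_e: "enc (cube_select (lo_block e) (hi_block e) n s) = e" if "i < n" "\<not> s i" for i s
    using qval_eq_val_if_unselected[of i s] that enc_cube_select m_left val_in_carrier e by simp
  have "(enc (cube_select (lo_block e) (hi_block e) n (\<lambda>i. i \<noteq> n - 1)),
      enc (cube_select (lo_block e) (hi_block e) n (\<lambda>_. True))) \<in> \<gamma>"
  proof (rule \<gamma>(2)[unfolded centralizes_iff_cube_select[OF length_\<alpha>s n_pos], rule_format])
    show "cube_pairs A \<alpha>s (lo_block e) (hi_block e)" by (rule cube_pairs_blocks[OF e nondeg])
    show "enc \<in> term_ops F (\<Sum>i<n. length (lo_block e i))" by (rule enc_term)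
    fix s :: "nat \<Rightarrow> bool" assume "\<not> (\<forall>i<n - 1. s i)"
    then obtain i where "i < n - 1" "\<not> s i" by blast
    then show "(enc (cube_select (lo_block e) (hi_block e) n (s(n - 1 := False))),
        enc (cube_select (lo_block e) (hi_block e) n (s(n - 1 := True)))) \<in> \<gamma>"
      using enc_e[of i] congruence_refl[OF \<gamma>(1) e] by simp
  qed
  moreover have "enc (cube_select (lo_block e) (hi_block e) n (\<lambda>_. True)) = val (\<lambda>_. True)"
    using enc_cube_select m_right val_in_carrier e unfolding e_def by simp
  ultimately show ?thesis using enc_e[of "n - 1"] n_pos unfolding e_def by simp
qed

end

context cube_algebra
begin

lemma commutator_top:
  assumes c: "c \<in> \<Delta>"
  shows "(q (take (N - 1) c), c ! (N - 1)) \<in> commutator A F \<alpha>s"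
  unfolding commutator_def
proof (rule InterI, clarify)
  fix \<gamma> assume \<gamma>: "congruence A F \<gamma>" "centralizes A F \<alpha>s \<gamma>"
  obtain t K dir lo hi where t: "t \<in> term_ops F K"
    and gens: "\<And>v. v < K \<Longrightarrow> dir v < n \<and> (lo v, hi v) \<in> \<alpha>s ! dir v"
    and c_nth: "\<And>p. p < N \<Longrightarrow> c ! p = t (map (\<lambda>v. if bit p (dir v) then hi v else lo v) [0..<K])"
    by (rule Delta_term_rep[OF c]) (rule that)
  interpret rep: cube_term A F n \<alpha>s q K t dir lo hi
    using t gens by unfold_locales auto
  have "take (N - 1) c = map (\<lambda>j. rep.val (\<lambda>i. bit j i \<and> True)) [0..<N - 1]"
    using length_Delta[OF c] c_nth by (simp add: take_eq_map_nth rep.val_def)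
  then have top_q: "q (take (N - 1) c) = rep.qval (\<lambda>_. True)" unfolding rep.qval_def by simp
  have top: "c ! (N - 1) = rep.val (\<lambda>_. True)"
    using c_nth[of "N - 1"] N_ge_2 rep.val_cong[of "bit (N - 1)" "\<lambda>_. True"] by (simp add: rep.val_def)
  show "(q (take (N - 1) c), c ! (N - 1)) \<in> \<gamma>"
  proof (cases "\<exists>i<n. \<forall>v<K. dir v = i \<longrightarrow> lo v = hi v")
    case True
    then obtain i where "i < n" "\<And>v. v < K \<Longrightarrow> dir v = i \<Longrightarrow> lo v = hi v" by blast
    then have "rep.qval (\<lambda>_. True) = rep.val (\<lambda>_. True)" by (rule rep.qval_eq_val_if_degenerate)
    then show ?thesis using top_q top congruence_refl[OF \<gamma>(1) rep.val_in_carrier] by simp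
  next
    case False
    then have "\<And>i. i < n \<Longrightarrow> \<exists>v<K. dir v = i \<and> lo v \<noteq> hi v" by blast
    then show ?thesis using rep.commutator_top_nondegenerate[OF \<gamma>] top_q top by simp
  qed
qed

lemma Delta_iff_faces_and_commutator:
  assumes "length a = N" "set a \<subseteq> A"
  shows "a \<in> \<Delta> \<longleftrightarrow> (\<forall>j<n. face j a \<in> Delta A F (\<alpha>s_except j)) \<and>
    (q (take (N - 1) a), a ! (N - 1)) \<in> commutator A F \<alpha>s"
proof
  assume "a \<in> \<Delta>"
  then show "(\<forall>j<n. face j a \<in> Delta A F (\<alpha>s_except j)) \<and>
      (q (take (N - 1) a), a ! (N - 1)) \<in> commutator A F \<alpha>s"
    using face_in_Delta commutator_top by blast
qed (use Delta_if_faces_and_commutator[OF assms] in blast)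

end

theorem mainTheorem9:
  fixes A :: "'a set" and F :: "'a operation set" and n :: nat
    and q :: "'a list \<Rightarrow> 'a" and \<alpha>s :: "('a \<times> 'a) set list" and a :: "'a list"
  assumes "algebra A F"
    and "has_malcev A F"
    and "n \<ge> 1"
    and "strong_cube_term A F n q"
    and "length \<alpha>s = n"
    and "\<forall>i<n. congruence A F (\<alpha>s ! i)"
    and "length a = 2 ^ n" and "set a \<subseteq> A"
  shows "a \<in> Delta A F \<alpha>s \<longleftrightarrow>
    ((\<forall>j<n. map (\<lambda>k. a ! k) (filter (\<lambda>k. \<not> bit k j) [0..<2 ^ n])
              \<in> Delta A F (take j \<alpha>s @ drop (Suc j) \<alpha>s)) \<and>
     (q (take (2 ^ n - 1) a), a ! (2 ^ n - 1)) \<in> commutator A F \<alpha>s)"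
proof -
  interpret cube_algebra A F n \<alpha>s q
    using assms(1-6) by unfold_locales
  show ?thesis
    using Delta_iff_faces_and_commutator[OF assms(7,8)]
    unfolding Delta_eq face_def \<alpha>s_except_def .
qed
end
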